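(* Let $v:\mathbf S\to\mathbb R_{\ge 0}$ be submodular over signals (SOS). If $v$ is monotone, then $v$ is self-bounding (i.e. $1$-self-bounding). In general (without monotonicity), $v$ is $2$-self-bounding.
   Context: There are $n$ bidders; each signal space $S_i\subseteq\mathbb R$ is totally ordered, $\mathbf S=S_1\times\cdots\times S_n$. For $\mathbf s\in\mathbf S$, $\mathbf s_{-i}$ denotes the profile without coordinate $i$ and $(o_i,\mathbf s_{-i})$ the profile with $s_i$ replaced by $o_i\in S_i$. Write $\mathbf s\succeq\mathbf t$ if $s_i\ge t_i$ for all $i$. A function $v:\mathbf S\to\mathbb R_{\ge0}$ is monotone if $v(\mathbf s)\ge v(\mathbf t)$ whenever $\mathbf s\succeq\mathbf t$. It is submodular over signals (SOS) if for every $i\in[n]$, every $\mathbf s\succeq\mathbf t$: $v(s_i,\mathbf s_{-i})-v(t_i,\mathbf s_{-i})\le v(s_i,\mathbf t_{-i})-v(t_i,\mathbf t_{-i})$. The lower estimate is $\underline v^{(i)}(\mathbf s)=\inf_{o_i\in S_i}v(o_i,\mathbf s_{-i})$. For $d\in[n]$, $v$ is $d$-self-bounding if for every $\mathbf s\in\mathbf S$, $\sum_{i=1}^n\big(v(\mathbf s)-\underline v^{(i)}(\mathbf s)\big)\le d\cdot v(\mathbf s)$; it is self-bounding if this holds with $d=1$. *)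

theory Defs
  imports Complex_Main "HOL-Library.FuncSet"
begin

text \<open>Bidders are indexed by 0..n-1. The signal space of bidder i is S i (a set of reals).
  A signal profile is an extensional function in PiE {..<n} S.\<close>

definition profiles :: "nat \<Rightarrow> (nat \<Rightarrow> real set) \<Rightarrow> (nat \<Rightarrow> real) set" where
  "profiles n S = PiE {..<n} S"

definition dominates :: "nat \<Rightarrow> (nat \<Rightarrow> real) \<Rightarrow> (nat \<Rightarrow> real) \<Rightarrow> bool" where
  "dominates n s t \<longleftrightarrow> (\<forall>i<n. t i \<le> s i)"

definition nonneg_valuation :: "nat \<Rightarrow> (nat \<Rightarrow> real set) \<Rightarrow> ((nat \<Rightarrow> real) \<Rightarrow> real) \<Rightarrow> bool" where
  "nonneg_valuation n S v \<longleftrightarrow> (\<forall>s\<in>profiles n S. 0 \<le> v s)"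

definition monotone_val :: "nat \<Rightarrow> (nat \<Rightarrow> real set) \<Rightarrow> ((nat \<Rightarrow> real) \<Rightarrow> real) \<Rightarrow> bool" where
  "monotone_val n S v \<longleftrightarrow>
     (\<forall>s\<in>profiles n S. \<forall>t\<in>profiles n S. dominates n s t \<longrightarrow> v t \<le> v s)"

text \<open>Submodular over signals: v(s_i,s_{-i}) - v(t_i,s_{-i}) <= v(s_i,t_{-i}) - v(t_i,t_{-i}).\<close>
definition SOS :: "nat \<Rightarrow> (nat \<Rightarrow> real set) \<Rightarrow> ((nat \<Rightarrow> real) \<Rightarrow> real) \<Rightarrow> bool" where
  "SOS n S v \<longleftrightarrow>
     (\<forall>i<n. \<forall>s\<in>profiles n S. \<forall>t\<in>profiles n S. dominates n s t \<longrightarrow>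
        v s - v (s(i := t i)) \<le> v (t(i := s i)) - v t)"

definition lower_estimate ::
  "(nat \<Rightarrow> real set) \<Rightarrow> ((nat \<Rightarrow> real) \<Rightarrow> real) \<Rightarrow> nat \<Rightarrow> (nat \<Rightarrow> real) \<Rightarrow> real" where
  "lower_estimate S v i s = (INF x\<in>S i. v (s(i := x)))"

definition self_bounding_with ::
  "nat \<Rightarrow> (nat \<Rightarrow> real set) \<Rightarrow> real \<Rightarrow> ((nat \<Rightarrow> real) \<Rightarrow> real) \<Rightarrow> bool" where
  "self_bounding_with n S d v \<longleftrightarrow>
     (\<forall>s\<in>profiles n S. (\<Sum>i<n. v s - lower_estimate S v i s) \<le> d * v s)"

end

theory Submission
  imports Defs
begin

text \<open>Fix a profile s and a second profile w, and let the coordinates i where w i \<le> s i be D and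
  the others U. Moving from s to w along the coordinates of D one at a time, SOS says that each
  step loses at least as much as the corresponding unilateral deviation s(i := w i) loses from s.
  Hence the unilateral losses over D telescope to at most v s - v(s overridden by w on D) \<le> v s,
  and likewise over U. This gives 2 v s in general; under monotonicity the losses over U are
  nonpositive, giving v s. Since the lower estimates are infima taken independently in each coordinate, a bound
  valid for every w bounds them as well.\<close>

lemma sum_INF_ge:
  fixes f :: "'a \<Rightarrow> 'b \<Rightarrow> real"
  assumes "finite I" and "\<And>i. i \<in> I \<Longrightarrow> A i \<noteq> {}"
    and "\<And>w. w \<in> PiE I A \<Longrightarrow> c \<le> (\<Sum>i\<in>I. f i (w i))"
  shows "c \<le> (\<Sum>i\<in>I. INF x\<in>A i. f i x)"
  using assms
proof (induction I arbitrary: c rule: finite_induct)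
  case empty
  then show ?case by simp
next
  case (insert k I)
  have "c - (\<Sum>i\<in>I. INF x\<in>A i. f i x) \<le> f k x" if x: "x \<in> A k" for x
  proof -
    have "c - f k x \<le> (\<Sum>i\<in>I. f i (w i))" if w: "w \<in> PiE I A" for w
    proof -
      have "w(k := x) \<in> PiE (insert k I) A"
        using w x by (auto simp: PiE_iff extensional_def)
      then have "c \<le> (\<Sum>i\<in>insert k I. f i ((w(k := x)) i))"
        using insert.prems(2) by blast
      also have "\<dots> = f k x + (\<Sum>i\<in>I. f i (w i))"
        using insert.hyps by (simp add: sum.insert) (intro sum.cong; auto)
      finally show ?thesis by simp
    qed
    then have "c - f k x \<le> (\<Sum>i\<in>I. INF x\<in>A i. f i x)"
      using insert by blast
    then show ?thesis by simp
  qed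
  then have "c - (\<Sum>i\<in>I. INF x\<in>A i. f i x) \<le> (INF x\<in>A k. f k x)"
    using insert.prems(1) by (intro cINF_greatest) auto
  then show ?case using insert by simp
qed

lemma profiles_upd:
  assumes "s \<in> profiles n S" "i < n" "x \<in> S i"
  shows "s(i := x) \<in> profiles n S"
  using assms by (auto simp: profiles_def PiE_iff extensional_def)

lemma profiles_override_on:
  assumes "s \<in> profiles n S" "w \<in> profiles n S" "I \<subseteq> {..<n}"
  shows "override_on s w I \<in> profiles n S"
  using assms by (auto simp: profiles_def PiE_iff extensional_def override_on_def)

lemma SOS_sum_deviations_le_override:
  assumes sos: "SOS n S v" and s: "s \<in> profiles n S" and w: "w \<in> profiles n S"
    and "finite I" "I \<subseteq> {..<n}"
    and dir: "(\<forall>i\<in>I. w i \<le> s i) \<or> (\<forall>i\<in>I. s i \<le> w i)"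
  shows "(\<Sum>i\<in>I. v s - v (s(i := w i))) \<le> v s - v (override_on s w I)"
  using \<open>finite I\<close> \<open>I \<subseteq> {..<n}\<close> dir
proof (induction I rule: finite_induct)
  case empty
  then show ?case by simp
next
  case (insert k I)
  let ?t = "override_on s w (insert k I)"
  have k: "k < n" and t: "?t \<in> profiles n S"
    using insert.prems profiles_override_on[OF s w] by auto
  have t_k: "?t k = w k" and t_reset: "?t(k := s k) = override_on s w I"
    using \<open>k \<notin> I\<close> by (auto simp: override_on_def)
  have "v s - v (s(k := w k)) \<le> v (override_on s w I) - v ?t"
  proof (cases "\<forall>i\<in>insert k I. w i \<le> s i")
    case True
    then have "dominates n s ?t" by (auto simp: dominates_def override_on_def)
    then have "v s - v (s(k := ?t k)) \<le> v (?t(k := s k)) - v ?t"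
      using sos k s t unfolding SOS_def by blast
    then show ?thesis using t_k t_reset by simp
  next
    case False
    then have "dominates n ?t s"
      using insert.prems by (auto simp: dominates_def override_on_def)
    then have "v ?t - v (?t(k := s k)) \<le> v (s(k := ?t k)) - v s"
      using sos k s t unfolding SOS_def by blast
    then show ?thesis using t_k t_reset by simp
  qed
  moreover have "(\<Sum>i\<in>I. v s - v (s(i := w i))) \<le> v s - v (override_on s w I)"
    using insert by blast
  moreover have "(\<Sum>i\<in>insert k I. v s - v (s(i := w i)))
      = (v s - v (s(k := w k))) + (\<Sum>i\<in>I. v s - v (s(i := w i)))"
    using insert.hyps by (rule sum.insert)
  ultimately show ?case by linarith
qed

lemma SOS_sum_deviations_le:
  assumes "nonneg_valuation n S v" "SOS n S v" "s \<in> profiles n S" "w \<in> profiles n S"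
    and "finite I" "I \<subseteq> {..<n}"
    and "(\<forall>i\<in>I. w i \<le> s i) \<or> (\<forall>i\<in>I. s i \<le> w i)"
  shows "(\<Sum>i\<in>I. v s - v (s(i := w i))) \<le> v s"
proof -
  have "0 \<le> v (override_on s w I)"
    using assms profiles_override_on by (auto simp: nonneg_valuation_def)
  then show ?thesis using SOS_sum_deviations_le_override[OF assms(2-)] by simp
qed

lemma sum_split_down_up:
  fixes w s :: "nat \<Rightarrow> real"
  shows "(\<Sum>i<n. f i) = (\<Sum>i\<in>{i. i < n \<and> w i \<le> s i}. f i) + (\<Sum>i\<in>{i. i < n \<and> s i < w i}. f i)"
proof -
  have "{..<n} = {i. i < n \<and> w i \<le> s i} \<union> {i. i < n \<and> s i < w i}" by auto
  then show ?thesis by (metis (no_types, lifting) sum.union_disjoint finite_lessThan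
      finite_subset Un_upper1 Un_upper2 disjoint_iff mem_Collect_eq not_le)
qed

lemma SOS_sum_deviations_le_twice:
  assumes "nonneg_valuation n S v" "SOS n S v" "s \<in> profiles n S" "w \<in> profiles n S"
  shows "(\<Sum>i<n. v s - v (s(i := w i))) \<le> 2 * v s"
proof -
  have "(\<Sum>i\<in>{i. i < n \<and> w i \<le> s i}. v s - v (s(i := w i))) \<le> v s"
    and "(\<Sum>i\<in>{i. i < n \<and> s i < w i}. v s - v (s(i := w i))) \<le> v s"
    by (intro SOS_sum_deviations_le[OF assms]; force)+
  then show ?thesis by (simp add: sum_split_down_up[of _ n w s])
qed

lemma SOS_monotone_sum_deviations_le:
  assumes nn: "nonneg_valuation n S v" and sos: "SOS n S v" and mono: "monotone_val n S v"
    and s: "s \<in> profiles n S" and w: "w \<in> profiles n S"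
  shows "(\<Sum>i<n. v s - v (s(i := w i))) \<le> v s"
proof -
  have "(\<Sum>i\<in>{i. i < n \<and> w i \<le> s i}. v s - v (s(i := w i))) \<le> v s"
    by (intro SOS_sum_deviations_le[OF nn sos s w]) auto
  moreover have "v s - v (s(i := w i)) \<le> 0" if "i < n" "s i < w i" for i
  proof -
    have "s(i := w i) \<in> profiles n S"
      using profiles_upd[OF s] w that by (auto simp: profiles_def)
    moreover have "dominates n (s(i := w i)) s"
      using that by (auto simp: dominates_def)
    ultimately show ?thesis using mono s by (auto simp: monotone_val_def)
  qed
  then have "(\<Sum>i\<in>{i. i < n \<and> s i < w i}. v s - v (s(i := w i))) \<le> 0"
    by (intro sum_nonpos) auto
  ultimately show ?thesis by (simp add: sum_split_down_up[of _ n w s])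
qed

lemma self_bounding_withI:
  assumes "\<And>s w. s \<in> profiles n S \<Longrightarrow> w \<in> profiles n S \<Longrightarrow>
      (\<Sum>i<n. v s - v (s(i := w i))) \<le> d * v s"
  shows "self_bounding_with n S d v"
  unfolding self_bounding_with_def
proof
  fix s assume s: "s \<in> profiles n S"
  have "real n * v s - d * v s \<le> (\<Sum>i<n. lower_estimate S v i s)"
    unfolding lower_estimate_def
  proof (rule sum_INF_ge)
    show "S i \<noteq> {}" if "i \<in> {..<n}" for i
      using s that by (auto simp: profiles_def PiE_iff)
    show "real n * v s - d * v s \<le> (\<Sum>i<n. v (s(i := w i)))" if "w \<in> PiE {..<n} S" for w
      using assms[OF s, of w] that by (simp add: profiles_def sum_subtractf)
  qed simp
  then show "(\<Sum>i<n. v s - lower_estimate S v i s) \<le> d * v s"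
    by (simp add: sum_subtractf)
qed

theorem mainTheorem1:
  fixes n :: nat and S :: "nat \<Rightarrow> real set" and v :: "(nat \<Rightarrow> real) \<Rightarrow> real"
  assumes "nonneg_valuation n S v" and "SOS n S v"
  shows "(monotone_val n S v \<longrightarrow> self_bounding_with n S 1 v) \<and> self_bounding_with n S 2 v"
  using self_bounding_withI[of n S v 1] self_bounding_withI[of n S v 2]
    SOS_monotone_sum_deviations_le[OF assms] SOS_sum_deviations_le_twice[OF assms]
  by simp

end
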